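(* Fix an integer $L\ge 1$ and $\alpha>0$, and let $N_{RF}=1$ or $N_{RF}=L$. For the IT-SU interleaved training scheme with $N_t$ beams, $L$ channel paths, $N_{RF}$ RF chains and threshold $\alpha$ described in the context, the average training length satisfies, as $N_t\to\infty$, $$T_{\text{IT-SU}}=\frac{N_t}{L+1}+\mathcal O(1),$$ where $\mathcal O(1)$ denotes a quantity bounded as $N_t\to\infty$ (with $L,\alpha$ fixed).
   Context: Channel model: for integers $N_t\ge L$, a random subset $\mathcal I\subset\{1,\dots,N_t\}$ with $|\mathcal I|=L$ is drawn uniformly among all $L$-element subsets; conditionally on $\mathcal I$, the coefficients $\bar h_i$, $i\in\mathcal I$, are i.i.d. circularly symmetric complex Gaussian $\mathcal{CN}(0,1/L)$, and $\bar h_i=0$ for $i\notin\mathcal I$. IT-SU scheme (with $N_{RF}\ge1$ RF chains and threshold $\alpha>0$): for $i=1,2,\dots,N_t$ in order, beam $i$ is trained, i.e. $\bar h_i$ becomes known. After step $i$, let $\mathcal B_i=\{l\le i:\bar h_l\neq 0\}$, $L_{B_i}=\min(N_{RF},|\mathcal B_i|)$, and let $\mathcal S_i\subset\mathcal B_i$ be the indices of the $L_{B_i}$ elements of $\mathcal B_i$ with largest $|\bar h_l|$. The training terminates at step $i$ if $\bar h_i\ne 0$ and $\sum_{l\in\mathcal S_i}|\bar h_l|^2>\alpha/N_t$; otherwise it proceeds to step $i+1$. The training length $T$ is the step at which the training terminates, and $T=N_t$ if it never terminates. The average training length is $T_{\text{IT-SU}}=\mathrm E[T]$. *)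

theory Defs
  imports "HOL-Probability.Probability"
begin

text \<open>Circularly symmetric complex Gaussian CN(0, v): real and imaginary parts
  independent real Gaussians N(0, v/2) (standard deviation sqrt(v/2)).\<close>
definition cgauss :: "real \<Rightarrow> complex measure" where
  "cgauss v = distr
     (density lborel (normal_density 0 (sqrt (v / 2))) \<Otimes>\<^sub>M
      density lborel (normal_density 0 (sqrt (v / 2))))
     borel (\<lambda>(x, y). Complex x y)"

definition path_sets :: "nat \<Rightarrow> nat \<Rightarrow> nat set set" where
  "path_sets Nt L = {I. I \<subseteq> {1..Nt} \<and> card I = L}"

text \<open>Sample space: (support I, i.i.d. Gaussians g_1..g_Nt); the channel is
  h_i = g_i for i in I and h_i = 0 otherwise, so conditionally on I the
  h_i, i in I, are i.i.d. CN(0,1/L).\<close>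
definition chan_space :: "nat \<Rightarrow> nat \<Rightarrow> (nat set \<times> (nat \<Rightarrow> complex)) measure" where
  "chan_space Nt L =
     measure_pmf (pmf_of_set (path_sets Nt L)) \<Otimes>\<^sub>M
     PiM {1..Nt} (\<lambda>_. cgauss (1 / real L))"

definition chan :: "nat set \<times> (nat \<Rightarrow> complex) \<Rightarrow> nat \<Rightarrow> complex" where
  "chan \<omega> i = (if i \<in> fst \<omega> then snd \<omega> i else 0)"

definition Bset :: "(nat \<Rightarrow> complex) \<Rightarrow> nat \<Rightarrow> nat set" where
  "Bset h i = {l \<in> {1..i}. h l \<noteq> 0}"

text \<open>Sum of |h_l|^2 over S_i, the L_{B_i} = min(N_RF, |B_i|) elements of B_i
  with largest |h_l| (the maximal such sum over subsets of that size).\<close>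
definition top_energy :: "nat \<Rightarrow> (nat \<Rightarrow> complex) \<Rightarrow> nat \<Rightarrow> real" where
  "top_energy NRF h i =
     Max ((\<lambda>S. \<Sum>l\<in>S. (cmod (h l))\<^sup>2) `
          {S. S \<subseteq> Bset h i \<and> card S = min NRF (card (Bset h i))})"

definition stops :: "nat \<Rightarrow> nat \<Rightarrow> real \<Rightarrow> (nat \<Rightarrow> complex) \<Rightarrow> nat \<Rightarrow> bool" where
  "stops Nt NRF \<alpha> h i \<longleftrightarrow> h i \<noteq> 0 \<and> top_energy NRF h i > \<alpha> / real Nt"

definition train_len :: "nat \<Rightarrow> nat \<Rightarrow> real \<Rightarrow> (nat \<Rightarrow> complex) \<Rightarrow> nat" where
  "train_len Nt NRF \<alpha> h =
     (if \<exists>i\<in>{1..Nt}. stops Nt NRF \<alpha> h i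
      then (LEAST i. i \<in> {1..Nt} \<and> stops Nt NRF \<alpha> h i) else Nt)"

definition T_ITSU :: "nat \<Rightarrow> nat \<Rightarrow> nat \<Rightarrow> real \<Rightarrow> real" where
  "T_ITSU Nt L NRF \<alpha> =
     (\<integral>\<omega>. real (train_len Nt NRF \<alpha> (chan \<omega>)) \<partial>(chan_space Nt L))"

end

theory Submission
  imports Defs
begin

text \<open>Let \<open>m = Min I\<close> be the first beam carrying a path. No beam before \<open>m\<close> can stop the
  training, so \<open>m \<le> T\<close>. At beam \<open>m\<close> only one nonzero coefficient has been seen, so the top
  energy is \<open>|h\<^sub>m|\<^sup>2\<close>, whatever \<open>N\<^sub>R\<^sub>F \<ge> 1\<close> is; the training therefore stops at \<open>m\<close> unless
  \<open>|h\<^sub>m|\<^sup>2 \<le> \<alpha>/N\<^sub>t\<close>. Since the Gaussian density is bounded, that event has probability at most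
  \<open>4\<alpha>L/N\<^sub>t\<close>, and as \<open>T \<le> N\<^sub>t\<close> it contributes at most \<open>4\<alpha>L\<close> to \<open>E[T]\<close>. Finally
  \<open>E[Min I] = (N\<^sub>t + 1)/(L + 1)\<close> by the hockey-stick identity.\<close>

definition coeff_space :: "nat \<Rightarrow> nat \<Rightarrow> (nat \<Rightarrow> complex) measure" where
  "coeff_space Nt L = PiM {1..Nt} (\<lambda>_. cgauss (1 / real L))"

lemma chan_space_eq: "chan_space Nt L = measure_pmf (pmf_of_set (path_sets Nt L)) \<Otimes>\<^sub>M coeff_space Nt L"
  by (simp add: chan_space_def coeff_space_def)

section \<open>Measurability of the training length\<close>

lemma sets_cgauss: "sets (cgauss v) = sets borel"
  by (simp add: cgauss_def)

lemma measurable_coeff_space_component: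
  assumes "m \<in> {1..Nt}"
  shows "(\<lambda>g. g m) \<in> borel_measurable (coeff_space Nt L)"
  using measurable_component_singleton[OF assms, of "\<lambda>_. cgauss (1 / real L)"]
  by (simp add: coeff_space_def measurable_cong_sets[OF refl sets_cgauss])

lemma measurable_chan [measurable]: "(\<lambda>\<omega>. chan \<omega> l) \<in> borel_measurable (chan_space Nt L)"
proof -
  have support: "Measurable.pred (chan_space Nt L) (\<lambda>\<omega>. l \<in> fst \<omega>)"
  proof -
    have "(\<lambda>I. l \<in> I) \<in> measurable (measure_pmf (pmf_of_set (path_sets Nt L))) (count_space UNIV)"
      by simp
    from measurable_compose[OF measurable_fst this] show ?thesis by (simp add: chan_space_eq)
  qed
  have coeff: "(\<lambda>\<omega>. snd \<omega> l) \<in> borel_measurable (chan_space Nt L)"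
  proof (cases "l \<in> {1..Nt}")
    case True
    from measurable_compose[OF measurable_snd measurable_coeff_space_component[OF True]]
    show ?thesis by (simp add: chan_space_eq)
  next
    case False
    then have "\<And>\<omega>. \<omega> \<in> space (chan_space Nt L) \<Longrightarrow> snd \<omega> l = undefined"
      by (auto simp: chan_space_def space_pair_measure space_PiM PiE_def extensional_def)
    then show ?thesis
      using measurable_cong[of "chan_space Nt L" "\<lambda>\<omega>. snd \<omega> l" "\<lambda>_. undefined" borel] by simp
  qed
  show ?thesis unfolding chan_def using support coeff by measurable
qed

text \<open>The maximum over subsets in \<^const>\<open>top_energy\<close> rewritten with quantifiers over finite
  sets only, which the measurability prover can handle.\<close>
lemma stops_iff_bounded_quantifiers:
  "stops Nt NRF \<alpha> h i \<longleftrightarrow> h i \<noteq> 0 \<and>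
   (\<exists>B\<in>Pow {1..i}. (\<forall>l\<in>{1..i}. l \<in> B \<longleftrightarrow> h l \<noteq> 0) \<and>
      (\<exists>S\<in>Pow {1..i}. S \<subseteq> B \<and> card S = min NRF (card B) \<and>
         \<alpha> / real Nt < (\<Sum>l\<in>S. (cmod (h l))\<^sup>2)))"
proof -
  define B where "B = Bset h i"
  have B: "B \<in> Pow {1..i}" "\<forall>l\<in>{1..i}. l \<in> B \<longleftrightarrow> h l \<noteq> 0"
    unfolding B_def Bset_def by auto
  then have B_unique: "\<And>B'. B' \<in> Pow {1..i} \<Longrightarrow> (\<forall>l\<in>{1..i}. l \<in> B' \<longleftrightarrow> h l \<noteq> 0) \<Longrightarrow> B' = B"
    by auto
  let ?F = "{S. S \<subseteq> B \<and> card S = min NRF (card B)}"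
  have "finite B" using B(1) finite_subset by auto
  then have "finite ?F" by (auto intro: finite_subset[of _ "Pow B"])
  moreover have "?F \<noteq> {}"
    using obtain_subset_with_card_n[of "min NRF (card B)" B] by auto
  ultimately have "\<alpha> / real Nt < top_energy NRF h i \<longleftrightarrow>
      (\<exists>S\<in>?F. \<alpha> / real Nt < (\<Sum>l\<in>S. (cmod (h l))\<^sup>2))"
    unfolding top_energy_def B_def[symmetric] by (subst Max_gr_iff) auto
  also have "\<dots> \<longleftrightarrow> (\<exists>S\<in>Pow {1..i}. S \<subseteq> B \<and> card S = min NRF (card B) \<and>
      \<alpha> / real Nt < (\<Sum>l\<in>S. (cmod (h l))\<^sup>2))"
    using B(1) by auto
  finally show ?thesis unfolding stops_def using B B_unique by metis
qed

lemma measurable_stops [measurable]: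
  "Measurable.pred (chan_space Nt L) (\<lambda>\<omega>. stops Nt NRF \<alpha> (chan \<omega>) i)"
  unfolding stops_iff_bounded_quantifiers by measurable

lemma first_index_or_default_eq_iff:
  "(if \<exists>i\<in>{1..N}. P i then (LEAST i. i \<in> {1..N} \<and> P i) else N) = (k::nat) \<longleftrightarrow>
   (k \<in> {1..N} \<and> P k \<and> (\<forall>j\<in>{1..N}. j < k \<longrightarrow> \<not> P j)) \<or> ((\<forall>i\<in>{1..N}. \<not> P i) \<and> k = N)"
proof (cases "\<exists>i\<in>{1..N}. P i")
  case True
  then obtain i where "i \<in> {1..N}" "P i" ..
  define m where "m = (LEAST i. i \<in> {1..N} \<and> P i)"
  have m: "m \<in> {1..N} \<and> P m"
    unfolding m_def by (rule LeastI[of _ i]) (use \<open>i \<in> {1..N}\<close> \<open>P i\<close> in simp)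
  have m_least: "\<And>j. j \<in> {1..N} \<Longrightarrow> P j \<Longrightarrow> m \<le> j"
    unfolding m_def by (rule Least_le) simp
  have "m = k \<longleftrightarrow> k \<in> {1..N} \<and> P k \<and> (\<forall>j\<in>{1..N}. j < k \<longrightarrow> \<not> P j)"
  proof
    assume "m = k"
    with m m_least show "k \<in> {1..N} \<and> P k \<and> (\<forall>j\<in>{1..N}. j < k \<longrightarrow> \<not> P j)"
      by (meson leD)
  next
    assume "k \<in> {1..N} \<and> P k \<and> (\<forall>j\<in>{1..N}. j < k \<longrightarrow> \<not> P j)"
    with m m_least show "m = k" by (meson le_antisym not_less)
  qed
  then show ?thesis using True unfolding m_def[symmetric] by auto
qed auto

lemma measurable_train_len [measurable]:
  "(\<lambda>\<omega>. real (train_len Nt NRF \<alpha> (chan \<omega>))) \<in> borel_measurable (chan_space Nt L)"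
proof -
  have "(\<lambda>\<omega>. train_len Nt NRF \<alpha> (chan \<omega>)) \<in> measurable (chan_space Nt L) (count_space UNIV)"
  proof (rule measurable_count_space_eq2_countable[THEN iffD2], safe)
    fix k :: nat
    have "Measurable.pred (chan_space Nt L) (\<lambda>\<omega>. train_len Nt NRF \<alpha> (chan \<omega>) = k)"
      unfolding train_len_def first_index_or_default_eq_iff by measurable
    then show "(\<lambda>\<omega>. train_len Nt NRF \<alpha> (chan \<omega>)) -` {k} \<inter> space (chan_space Nt L)
        \<in> sets (chan_space Nt L)"
      unfolding pred_def by (simp add: vimage_def Int_def conj_commute)
  qed auto
  then show ?thesis by measurable
qed

section \<open>Deterministic bounds on the training length\<close>

lemma train_len_cases:
  obtains (stopped) "train_len Nt NRF \<alpha> h \<in> {1..Nt}" "stops Nt NRF \<alpha> h (train_len Nt NRF \<alpha> h)"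
    "\<forall>j\<in>{1..Nt}. j < train_len Nt NRF \<alpha> h \<longrightarrow> \<not> stops Nt NRF \<alpha> h j"
  | (never) "train_len Nt NRF \<alpha> h = Nt" "\<forall>i\<in>{1..Nt}. \<not> stops Nt NRF \<alpha> h i"
  using first_index_or_default_eq_iff[of Nt "stops Nt NRF \<alpha> h" "train_len Nt NRF \<alpha> h"]
  unfolding train_len_def[symmetric] by blast

lemma train_len_le: "train_len Nt NRF \<alpha> h \<le> Nt"
  by (cases rule: train_len_cases[of Nt NRF \<alpha> h]) auto

lemma le_train_len:
  assumes "m \<le> Nt" and "\<And>l. 1 \<le> l \<Longrightarrow> l < m \<Longrightarrow> h l = 0"
  shows "m \<le> train_len Nt NRF \<alpha> h"
proof (cases rule: train_len_cases[of Nt NRF \<alpha> h])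
  case stopped
  then show ?thesis using assms(2) by (meson atLeastAtMost_iff not_le stops_def)
qed (use assms in simp)

lemma train_len_le_first_nonzero:
  assumes m: "m \<in> {1..Nt}" and before: "\<And>l. 1 \<le> l \<Longrightarrow> l < m \<Longrightarrow> h l = 0"
    and large: "\<alpha> / real Nt < (cmod (h m))\<^sup>2" and "\<alpha> \<ge> 0" and "NRF \<ge> 1"
  shows "train_len Nt NRF \<alpha> h \<le> m"
proof -
  have "0 \<le> \<alpha> / real Nt" using \<open>\<alpha> \<ge> 0\<close> by simp
  then have "h m \<noteq> 0" using large by auto
  then have "Bset h m = {m}"
    using before m by (force simp: Bset_def)
  then have "{S. S \<subseteq> Bset h m \<and> card S = min NRF (card (Bset h m))} = {{m}}"
    using \<open>NRF \<ge> 1\<close> by (auto simp: card_1_singleton_iff)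
  then have "top_energy NRF h m = (cmod (h m))\<^sup>2"
    unfolding top_energy_def by simp
  then have "stops Nt NRF \<alpha> h m" using \<open>h m \<noteq> 0\<close> large by (simp add: stops_def)
  show ?thesis
  proof (cases rule: train_len_cases[of Nt NRF \<alpha> h])
    case stopped
    then show ?thesis using m \<open>stops Nt NRF \<alpha> h m\<close> by (meson not_le)
  qed (use m \<open>stops Nt NRF \<alpha> h m\<close> in auto)
qed

section \<open>Small-ball estimate for the complex Gaussian\<close>

lemma normal_density_le: "normal_density \<mu> \<sigma> x \<le> 1 / sqrt (2 * pi * \<sigma>\<^sup>2)"
  unfolding normal_density_def by (rule mult_left_le) auto

lemma emeasure_normal_interval_le:
  assumes "r \<ge> 0"
  shows "emeasure (density lborel (normal_density \<mu> \<sigma>)) {-r..r}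
    \<le> ennreal (2 * r / sqrt (2 * pi * \<sigma>\<^sup>2))"
proof -
  have "emeasure (density lborel (normal_density \<mu> \<sigma>)) {-r..r}
      = (\<integral>\<^sup>+x. ennreal (normal_density \<mu> \<sigma> x) * indicator {-r..r} x \<partial>lborel)"
    by (subst emeasure_density) auto
  also have "\<dots> \<le> (\<integral>\<^sup>+x. ennreal (1 / sqrt (2 * pi * \<sigma>\<^sup>2)) * indicator {-r..r} x \<partial>lborel)"
    by (intro nn_integral_mono) (auto simp: normal_density_le split: split_indicator)
  also have "\<dots> = ennreal (2 * r / sqrt (2 * pi * \<sigma>\<^sup>2))"
    using assms by (simp add: nn_integral_cmult_indicator ennreal_mult[symmetric])
  finally show ?thesis .
qed

lemma measurable_Complex_pair [measurable]:
  assumes "sets M = sets borel" and "sets N = sets borel"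
  shows "(\<lambda>(x, y). Complex x y) \<in> borel_measurable (M \<Otimes>\<^sub>M N)"
proof -
  have "(\<lambda>(x, y). Complex x y) = (\<lambda>p. complex_of_real (fst p) + \<i> * complex_of_real (snd p))"
    by (auto simp: complex_eq_iff)
  then show ?thesis
    using assms by (simp add: measurable_cong_sets[OF sets_pair_measure_cong[OF assms] refl])
qed

lemma prob_space_cgauss:
  assumes "v > 0"
  shows "prob_space (cgauss v)"
proof -
  let ?N = "density lborel (normal_density 0 (sqrt (v / 2)))"
  interpret prob_space ?N using assms by (intro prob_space_normal_density) auto
  interpret pair_prob_space ?N ?N ..
  show ?thesis unfolding cgauss_def by (intro prob_space_distr measurable_Complex_pair) auto
qed

lemma measure_cgauss_small_ball_le:
  assumes "v > 0" and "c \<ge> 0"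
  shows "measure (cgauss v) {z. (cmod z)\<^sup>2 \<le> c} \<le> 4 * c / v"
proof -
  define \<sigma> where "\<sigma> = sqrt (v / 2)"
  have "\<sigma> > 0" using assms by (simp add: \<sigma>_def)
  let ?N = "density lborel (normal_density 0 \<sigma>)"
  interpret N: prob_space ?N using \<open>\<sigma> > 0\<close> by (intro prob_space_normal_density) auto
  let ?A = "{- sqrt c..sqrt c}"
  have square: "(\<lambda>(x, y). Complex x y) -` {z. (cmod z)\<^sup>2 \<le> c} \<subseteq> ?A \<times> ?A"
  proof
    fix p assume "p \<in> (\<lambda>(x, y). Complex x y) -` {z. (cmod z)\<^sup>2 \<le> c}"
    then obtain a b where p: "p = (a, b)" and "(cmod (Complex a b))\<^sup>2 \<le> c" by (cases p) auto
    then have "a\<^sup>2 + b\<^sup>2 \<le> c" by (simp add: cmod_def)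
    then have "a\<^sup>2 \<le> c" "b\<^sup>2 \<le> c" using zero_le_power2[of a] zero_le_power2[of b] by linarith+
    then have "\<bar>a\<bar> \<le> sqrt c" "\<bar>b\<bar> \<le> sqrt c" by (metis power2_abs real_le_rsqrt)+
    then show "p \<in> ?A \<times> ?A" using p by auto
  qed
  have "emeasure (cgauss v) {z. (cmod z)\<^sup>2 \<le> c}
      = emeasure (?N \<Otimes>\<^sub>M ?N) ((\<lambda>(x, y). Complex x y) -` {z. (cmod z)\<^sup>2 \<le> c} \<inter> space (?N \<Otimes>\<^sub>M ?N))"
    unfolding cgauss_def \<sigma>_def[symmetric] by (rule emeasure_distr) auto
  also have "\<dots> \<le> emeasure (?N \<Otimes>\<^sub>M ?N) (?A \<times> ?A)"
    by (rule emeasure_mono[OF order_trans[OF Int_lower1 square]]) simp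
  also have "\<dots> = emeasure ?N ?A * emeasure ?N ?A"
    by (rule N.emeasure_pair_measure_Times) auto
  also have "\<dots> \<le> ennreal (2 * sqrt c / sqrt (2 * pi * \<sigma>\<^sup>2)) * ennreal (2 * sqrt c / sqrt (2 * pi * \<sigma>\<^sup>2))"
    using emeasure_normal_interval_le[of "sqrt c" 0 \<sigma>] assms by (intro mult_mono) auto
  also have "\<dots> = ennreal (4 * c / (2 * pi * \<sigma>\<^sup>2))"
    using assms \<open>\<sigma> > 0\<close> by (simp add: ennreal_mult[symmetric] real_sqrt_mult[symmetric])
  also have "\<dots> \<le> ennreal (4 * c / v)"
    using assms pi_gt3 by (intro ennreal_leI divide_left_mono) (auto simp: \<sigma>_def)
  finally show ?thesis using assms by (simp add: measure_def enn2real_leI)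
qed

lemma prob_space_coeff_space: "L \<ge> 1 \<Longrightarrow> prob_space (coeff_space Nt L)"
  unfolding coeff_space_def by (intro prob_space_PiM prob_space_cgauss) auto

lemma measure_coeff_space_small_le:
  assumes "L \<ge> 1" and "m \<in> {1..Nt}" and "c \<ge> 0"
  shows "measure (coeff_space Nt L) {g \<in> space (coeff_space Nt L). (cmod (g m))\<^sup>2 \<le> c} \<le> 4 * c * real L"
proof -
  interpret product_prob_space "\<lambda>_. cgauss (1 / real L)" "{1..Nt}"
    using prob_space_cgauss[of "1 / real L"] assms(1)
    by (intro product_prob_spaceI prob_space_imp_sigma_finite) auto
  have "{z. (cmod z)\<^sup>2 \<le> c} \<in> sets (cgauss (1 / real L))" by (simp only: sets_cgauss) measurable
  from emeasure_PiM_Collect_single[OF assms(2) this]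
  have "measure (coeff_space Nt L) {g \<in> space (coeff_space Nt L). (cmod (g m))\<^sup>2 \<le> c}
      = measure (cgauss (1 / real L)) {z. (cmod z)\<^sup>2 \<le> c}"
    by (simp add: coeff_space_def measure_def)
  also have "\<dots> \<le> 4 * c * real L"
    using measure_cgauss_small_ball_le[of "1 / real L" c] assms by simp
  finally show ?thesis .
qed

section \<open>Position of the first path\<close>

lemma card_path_sets: "card (path_sets n L) = n choose L"
  unfolding path_sets_def by (subst n_subsets) auto

lemma finite_path_sets: "finite (path_sets n L)"
  unfolding path_sets_def by (auto intro: finite_subset[of _ "Pow {1..n}"])

lemma path_sets_Min_ge_eq:
  assumes "L \<ge> 1" and "k \<ge> 1"
  shows "{I \<in> path_sets n L. k \<le> Min I} = {I. I \<subseteq> {k..n} \<and> card I = L}"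
proof -
  have "I \<subseteq> {k..n} \<longleftrightarrow> I \<subseteq> {1..n} \<and> k \<le> Min I" if "card I = L" for I
  proof -
    have "finite I" "I \<noteq> {}" using that assms(1) card_gt_0_iff by fastforce+
    then show ?thesis using assms(2) by auto
  qed
  then show ?thesis unfolding path_sets_def by auto
qed

text \<open>Counting pairs \<open>(k, I)\<close> with \<open>k \<le> Min I\<close>: for fixed \<open>k\<close> these are the \<open>L\<close>-subsets of
  \<open>{k..n}\<close>, and the hockey-stick identity sums their numbers.\<close>
lemma sum_Min_path_sets:
  assumes "L \<ge> 1"
  shows "(\<Sum>I\<in>path_sets n L. Min I) = Suc n choose Suc L"
proof -
  have Min_eq_card: "Min I = card {k\<in>{1..n}. k \<le> Min I}" if "I \<in> path_sets n L" for I
  proof -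
    have "Min I \<in> {1..n}"
      using that assms Min_in[of I] finite_subset unfolding path_sets_def by fastforce
    then have "{k\<in>{1..n}. k \<le> Min I} = {1..Min I}" by auto
    then show ?thesis by simp
  qed
  have "(\<Sum>I\<in>path_sets n L. Min I) = (\<Sum>I\<in>path_sets n L. \<Sum>k\<in>{1..n}. if k \<le> Min I then 1 else 0)"
    using Min_eq_card by (intro sum.cong) (simp_all add: sum.inter_filter[symmetric])
  also have "\<dots> = (\<Sum>k\<in>{1..n}. card {I \<in> path_sets n L. k \<le> Min I})"
    by (subst sum.swap) (simp add: sum.inter_filter[symmetric] finite_path_sets)
  also have "\<dots> = (\<Sum>k\<in>{1..n}. (Suc n - k) choose L)"
    using assms by (intro sum.cong refl) (simp add: path_sets_Min_ge_eq n_subsets)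
  also have "\<dots> = (\<Sum>k\<in>{1..n}. k choose L)"
    by (subst sum.atLeastAtMost_rev) (intro sum.cong refl, auto)
  also have "\<dots> = (\<Sum>k\<le>n. k choose L)"
    using assms by (simp add: atMost_atLeast0 sum.atLeast_Suc_atMost)
  also have "\<dots> = Suc n choose Suc L" by (rule sum_choose_upper)
  finally show ?thesis .
qed

lemma average_Min_path_sets:
  assumes "1 \<le> L" and "L \<le> n"
  shows "(\<Sum>I\<in>path_sets n L. real (Min I)) / real (card (path_sets n L)) = (real n + 1) / (real L + 1)"
proof -
  have "real (Suc n) * real (n choose L) = real (Suc n choose Suc L) * real (Suc L)"
    using Suc_times_binomial_eq[of n L] by (metis of_nat_mult)
  moreover have "n choose L > 0" using assms by simp
  ultimately show ?thesis
    using sum_Min_path_sets[OF assms(1), of n]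
    unfolding card_path_sets of_nat_sum[symmetric] by (simp add: field_simps)
qed

lemma (in prob_space) integral_le_const_add_indicator:
  fixes f :: "'a \<Rightarrow> real"
  assumes "integrable M f" and "E \<in> events"
    and "\<And>x. x \<in> space M \<Longrightarrow> f x \<le> a + b * indicator E x"
  shows "expectation f \<le> a + b * prob E"
proof -
  have "integrable M (\<lambda>x. b * indicator E x)"
    using assms(2) by (intro integrable_mult_right integrable_real_indicator)
      (auto simp: less_top[symmetric])
  then have "expectation f \<le> expectation (\<lambda>x. a + b * indicator E x)"
    using assms by (intro integral_mono) auto
  also have "\<dots> = a + b * prob E"
    using \<open>integrable M (\<lambda>x. b * indicator E x)\<close> assms(2) by (simp add: Int_absorb2 prob_space)
  finally show ?thesis .
qed

lemma integrable_train_len_coeff_space: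
  assumes "L \<ge> 1"
  shows "integrable (coeff_space Nt L) (\<lambda>g. real (train_len Nt NRF \<alpha> (chan (I, g))))"
proof -
  interpret prob_space "coeff_space Nt L" using assms by (rule prob_space_coeff_space)
  have "(\<lambda>g. (I, g)) \<in> measurable (coeff_space Nt L) (chan_space Nt L)"
    unfolding chan_space_eq by (rule measurable_Pair1') simp
  from measurable_compose[OF this measurable_train_len]
  show ?thesis by (intro integrable_const_bound[where B = "real Nt"]) (auto simp: train_len_le)
qed

lemma conditional_train_len_bounds:
  assumes "1 \<le> L" and "\<alpha> > 0" and "NRF \<ge> 1" and I: "I \<in> path_sets Nt L"
  defines "ET \<equiv> \<integral>g. real (train_len Nt NRF \<alpha> (chan (I, g))) \<partial>coeff_space Nt L"
  shows "real (Min I) \<le> ET" and "ET \<le> real (Min I) + 4 * \<alpha> * real L"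
proof -
  interpret prob_space "coeff_space Nt L" using assms(1) by (rule prob_space_coeff_space)
  define m where "m = Min I"
  have "finite I" "I \<noteq> {}" "I \<subseteq> {1..Nt}"
    using I assms(1) finite_subset unfolding path_sets_def by fastforce+
  then have "m \<in> I" unfolding m_def by simp
  with \<open>I \<subseteq> {1..Nt}\<close> have m: "m \<in> I" "m \<in> {1..Nt}" by auto
  have before_m: "\<And>l. l < m \<Longrightarrow> chan (I, g) l = 0" for g
    using \<open>finite I\<close> unfolding m_def chan_def by (auto dest: Min_le)
  note integrable = integrable_train_len_coeff_space[OF assms(1)]
  have "m \<le> train_len Nt NRF \<alpha> (chan (I, g))" for g
    using m(2) before_m by (intro le_train_len) auto
  then show "real (Min I) \<le> ET"
    unfolding ET_def m_def[symmetric] by (intro integral_ge_const integrable AE_I2) simp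
  note [measurable] = measurable_coeff_space_component[OF m(2)]
  define E where "E = {g \<in> space (coeff_space Nt L). (cmod (g m))\<^sup>2 \<le> \<alpha> / real Nt}"
  have "E \<in> events" unfolding E_def by measurable
  have "real (train_len Nt NRF \<alpha> (chan (I, g))) \<le> real m + real Nt * indicator E g"
    if "g \<in> space (coeff_space Nt L)" for g
  proof (cases "g \<in> E")
    case False
    then have "\<alpha> / real Nt < (cmod (chan (I, g) m))\<^sup>2"
      using that m(1) unfolding E_def chan_def by auto
    then show ?thesis
      using train_len_le_first_nonzero[OF m(2) before_m] assms False by auto
  qed (use train_len_le[of Nt NRF \<alpha> "chan (I, g)"] in simp)
  then have "ET \<le> real m + real Nt * prob E"
    unfolding ET_def by (intro integral_le_const_add_indicator integrable \<open>E \<in> events\<close>)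
  also have "real Nt * prob E \<le> 4 * \<alpha> * real L"
    using measure_coeff_space_small_le[OF assms(1) m(2), of "\<alpha> / real Nt"] assms(2)
    unfolding E_def by (cases "Nt = 0") (auto simp: field_simps)
  finally show "ET \<le> real (Min I) + 4 * \<alpha> * real L" by (simp add: m_def)
qed

lemma T_ITSU_eq_average:
  assumes "1 \<le> L" and "L \<le> Nt"
  shows "T_ITSU Nt L NRF \<alpha> = (\<Sum>I\<in>path_sets Nt L.
      \<integral>g. real (train_len Nt NRF \<alpha> (chan (I, g))) \<partial>coeff_space Nt L) / real (card (path_sets Nt L))"
proof -
  have "{1..L} \<in> path_sets Nt L" using assms by (auto simp: path_sets_def)
  then have nonempty: "path_sets Nt L \<noteq> {}" by auto
  interpret coeff: prob_space "coeff_space Nt L" using assms(1) by (rule prob_space_coeff_space)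
  interpret P: pair_prob_space "measure_pmf (pmf_of_set (path_sets Nt L))" "coeff_space Nt L" ..
  have integrable: "integrable (chan_space Nt L) (\<lambda>\<omega>. real (train_len Nt NRF \<alpha> (chan \<omega>)))"
    unfolding chan_space_eq
    using measurable_train_len[of Nt NRF \<alpha> L, unfolded chan_space_eq]
    by (intro P.integrable_const_bound[where B = "real Nt"]) (auto simp: train_len_le)
  have "T_ITSU Nt L NRF \<alpha> = (\<integral>I. (\<integral>g. real (train_len Nt NRF \<alpha> (chan (I, g))) \<partial>coeff_space Nt L)
      \<partial>measure_pmf (pmf_of_set (path_sets Nt L)))"
    unfolding T_ITSU_def chan_space_eq using P.integral_fst'[OF integrable[unfolded chan_space_eq]] by simp
  also have "\<dots> = (\<Sum>I\<in>path_sets Nt L. (\<integral>g. real (train_len Nt NRF \<alpha> (chan (I, g))) \<partial>coeff_space Nt L)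
      * pmf (pmf_of_set (path_sets Nt L)) I)"
    using nonempty finite_path_sets by (intro integral_measure_pmf_real) auto
  finally show ?thesis
    using nonempty finite_path_sets by (simp add: sum_divide_distrib)
qed

lemma T_ITSU_bounds:
  assumes "1 \<le> L" and "L \<le> Nt" and "\<alpha> > 0" and "NRF \<ge> 1"
  shows "(real Nt + 1) / (real L + 1) \<le> T_ITSU Nt L NRF \<alpha>"
    and "T_ITSU Nt L NRF \<alpha> \<le> (real Nt + 1) / (real L + 1) + 4 * \<alpha> * real L"
proof -
  let ?PS = "path_sets Nt L"
  have "card ?PS > 0" using assms(1,2) by (simp add: card_path_sets)
  note bounds = conditional_train_len_bounds[OF assms(1,3,4)]
  show "(real Nt + 1) / (real L + 1) \<le> T_ITSU Nt L NRF \<alpha>"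
    unfolding T_ITSU_eq_average[OF assms(1,2)] average_Min_path_sets[OF assms(1,2), symmetric]
    using bounds(1) \<open>card ?PS > 0\<close> by (intro divide_right_mono sum_mono) auto
  have "T_ITSU Nt L NRF \<alpha> \<le> (\<Sum>I\<in>?PS. real (Min I) + 4 * \<alpha> * real L) / real (card ?PS)"
    unfolding T_ITSU_eq_average[OF assms(1,2)]
    using bounds(2) \<open>card ?PS > 0\<close> by (intro divide_right_mono sum_mono) auto
  also have "\<dots> = (\<Sum>I\<in>?PS. real (Min I)) / real (card ?PS) + 4 * \<alpha> * real L"
    using \<open>card ?PS > 0\<close> by (simp add: sum.distrib add_divide_distrib)
  also have "\<dots> = (real Nt + 1) / (real L + 1) + 4 * \<alpha> * real L"
    by (simp only: average_Min_path_sets[OF assms(1,2)])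
  finally show "T_ITSU Nt L NRF \<alpha> \<le> (real Nt + 1) / (real L + 1) + 4 * \<alpha> * real L" .
qed

theorem lemma1:
  fixes L NRF :: nat and \<alpha> :: real
  assumes "L \<ge> 1" and "\<alpha> > 0" and "NRF = 1 \<or> NRF = L"
  shows "\<exists>C. \<forall>\<^sub>F Nt in sequentially.
           \<bar>T_ITSU Nt L NRF \<alpha> - real Nt / (real L + 1)\<bar> \<le> C"
proof (intro exI)
  have "NRF \<ge> 1" using assms by auto
  show "\<forall>\<^sub>F Nt in sequentially. \<bar>T_ITSU Nt L NRF \<alpha> - real Nt / (real L + 1)\<bar> \<le> 1 + 4 * \<alpha> * real L"
    using eventually_ge_at_top[of L]
  proof eventually_elim
    case (elim Nt)
    have "(real Nt + 1) / (real L + 1) = real Nt / (real L + 1) + 1 / (real L + 1)"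
      by (simp add: add_divide_distrib)
    moreover have "0 \<le> 1 / (real L + 1)" "1 / (real L + 1) \<le> 1" by auto
    ultimately show ?case
      using T_ITSU_bounds[OF assms(1) elim assms(2) \<open>NRF \<ge> 1\<close>] by linarith
  qed
qed

end
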